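(* $GR(4,K_4,3) = 10$.
   Context: For positive integers $r,s,t$, $GR(r,K_s,t)$ denotes the minimum integer $n$ such that every coloring of the edges of $K_n$ with $r$ colors contains a copy of $K_s$ whose edges use at most $t$ distinct colors. *)

theory Defs
  imports Main
begin

definition edges_of :: "nat set \<Rightarrow> nat set set" where
  "edges_of V = {e. e \<subseteq> V \<and> card e = 2}"

definition edge_colouring :: "nat \<Rightarrow> nat \<Rightarrow> (nat set \<Rightarrow> nat) \<Rightarrow> bool" where
  "edge_colouring r n c \<longleftrightarrow> (\<forall>e \<in> edges_of {..<n}. c e < r)"

definition GR_prop :: "nat \<Rightarrow> nat \<Rightarrow> nat \<Rightarrow> nat \<Rightarrow> bool" where
  "GR_prop r s t n \<longleftrightarrow>
     (\<forall>c. edge_colouring r n c \<longrightarrow>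
        (\<exists>S. S \<subseteq> {..<n} \<and> card S = s \<and> card (c ` edges_of S) \<le> t))"

definition GR :: "nat \<Rightarrow> nat \<Rightarrow> nat \<Rightarrow> nat" where
  "GR r s t = (LEAST n. GR_prop r s t n)"

end

theory Submission
  imports Defs
begin

text \<open>Upper bound: if a 4-colouring of K_10 had no K_4 seeing at most three colours,
  then for each colour \<open>i\<close> the edges not coloured \<open>i\<close> would form a K_4-free graph, so by
  Turan's theorem at most 33 of the 45 edges avoid \<open>i\<close>. Every edge avoids exactly three colours,
  and double counting gives \<open>3 \<cdot> 45 \<le> 4 \<cdot> 33\<close>, which is false.
  Lower bound: view the vertices of K_9 as the points of the affine plane over \<open>\<int>/3\<close> and
  colour an edge by the parallel class of the line through its ends. Each class has three lines,
  so any four points contain two on a common line of every class: every K_4 sees all four colours.\<close>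

lemma finite_edges_of: "finite V \<Longrightarrow> finite (edges_of V)"
  unfolding edges_of_def by (rule finite_subset[of _ "Pow V"]) auto

lemma card_edges_of: "finite V \<Longrightarrow> card (edges_of V) = card V choose 2"
  unfolding edges_of_def by (rule n_subsets)

lemma edges_of_mono: "S \<subseteq> T \<Longrightarrow> edges_of S \<subseteq> edges_of T"
  unfolding edges_of_def by auto

lemma doubleton_in_edges_of: "v \<in> V \<Longrightarrow> w \<in> V \<Longrightarrow> v \<noteq> w \<Longrightarrow> {v, w} \<in> edges_of V"
  unfolding edges_of_def by auto

lemma edges_of_iff: "e \<in> edges_of V \<longleftrightarrow> (\<exists>v w. e = {v, w} \<and> v \<in> V \<and> w \<in> V \<and> v \<noteq> w)"
  unfolding edges_of_def by (auto simp: card_2_iff)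

lemma edges_of_insert:
  "edges_of (insert v K) = edges_of K \<union> (\<lambda>w. {v, w}) ` K" if "v \<notin> K"
proof (intro set_eqI iffI)
  fix e assume "e \<in> edges_of (insert v K)"
  then obtain a b where "e = {a, b}" "a \<in> insert v K" "b \<in> insert v K" "a \<noteq> b"
    unfolding edges_of_iff by blast
  then show "e \<in> edges_of K \<union> (\<lambda>w. {v, w}) ` K"
    by (auto simp: edges_of_iff insert_commute)
qed (use that in \<open>auto simp: edges_of_iff\<close>)

lemma card_edges_le_split:
  assumes "finite V" "K \<subseteq> V" "E \<subseteq> edges_of V"
  shows "card E \<le> card (edges_of K) + (\<Sum>v\<in>V - K. card {w\<in>K. {v, w} \<in> E})
                   + card (E \<inter> edges_of (V - K))"
proof -
  define C where "C = (\<Union>v\<in>V - K. (\<lambda>w. {v, w}) ` {w\<in>K. {v, w} \<in> E})"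
  have fin: "finite K" "finite (V - K)" using assms finite_subset by auto
  have "E \<subseteq> edges_of K \<union> C \<union> E \<inter> edges_of (V - K)"
  proof
    fix e assume "e \<in> E"
    with assms(3) have "e \<in> edges_of V" by blast
    then obtain v w where e: "e = {v, w}" "v \<in> V" "w \<in> V" "v \<noteq> w"
      unfolding edges_of_iff by blast
    consider "v \<in> K" "w \<in> K" | "v \<notin> K" "w \<notin> K" | "v \<notin> K" "w \<in> K" | "v \<in> K" "w \<notin> K"
      by blast
    then show "e \<in> edges_of K \<union> C \<union> E \<inter> edges_of (V - K)"
    proof cases
      case 3 then show ?thesis using e \<open>e \<in> E\<close> unfolding C_def by blast
    next
      case 4
      then have "v \<in> {u\<in>K. {w, u} \<in> E}" "w \<in> V - K"
        using e \<open>e \<in> E\<close> by (auto simp: insert_commute)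
      then have "{w, v} \<in> C" unfolding C_def by blast
      then show ?thesis using e by (simp add: insert_commute)
    qed (use e \<open>e \<in> E\<close> in \<open>auto simp: edges_of_iff\<close>)
  qed
  then have "card E \<le> card (edges_of K \<union> C \<union> E \<inter> edges_of (V - K))"
    by (rule card_mono[rotated]) (auto simp: C_def fin finite_edges_of)
  also have "\<dots> \<le> card (edges_of K) + card C + card (E \<inter> edges_of (V - K))"
    by (meson add_mono card_Un_le le_refl order_trans)
  also have "card C \<le> (\<Sum>v\<in>V - K. card ((\<lambda>w. {v, w}) ` {w\<in>K. {v, w} \<in> E}))"
    unfolding C_def by (rule card_UN_le[OF fin(2)])
  also have "\<dots> \<le> (\<Sum>v\<in>V - K. card {w\<in>K. {v, w} \<in> E})"
    by (rule sum_mono) (rule card_image_le, simp add: fin(1))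
  finally show ?thesis by simp
qed

lemma card_neighbours_in_clique_less:
  assumes "finite K" "edges_of K \<subseteq> E" "v \<notin> K" "\<not> edges_of (insert v K) \<subseteq> E"
  shows "card {w\<in>K. {v, w} \<in> E} < card K"
proof -
  have "{w\<in>K. {v, w} \<in> E} \<noteq> K"
    using assms(2-4) by (auto simp: edges_of_insert)
  then show ?thesis
    using assms(1) by (intro psubset_card_mono) auto
qed

text \<open>With \<open>d = k + 1 - s\<close>, the slack in this inequality is \<open>(2 m + s) d\<close>.\<close>
lemma turan_step_arith:
  fixes k s m e :: nat
  assumes "1 \<le> s" "s \<le> k + 1" "2 * (k + 1) * e \<le> k * m\<^sup>2"
  shows "2 * (k + 1) * ((s choose 2) + m * (s - 1) + e) \<le> k * (m + s)\<^sup>2"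
proof -
  obtain t d where t: "s = t + 1" and d: "k = t + d"
    using assms(1,2) by (metis add.commute le_add_diff_inverse le_add_diff_inverse2 le_diff_conv)
  have "2 * (s choose 2) = s * t" using t by (simp add: choose_two)
  have "2 * (k + 1) * ((s choose 2) + m * (s - 1) + e)
        = (k + 1) * (s * t) + 2 * (k + 1) * m * t + 2 * (k + 1) * e"
    using \<open>2 * (s choose 2) = s * t\<close> t by (simp add: algebra_simps)
  also have "\<dots> \<le> (k + 1) * (s * t) + 2 * (k + 1) * m * t + k * m\<^sup>2"
    using assms(3) by simp
  also have "\<dots> + (2 * m + s) * d = k * (m + s)\<^sup>2"
    unfolding t d by (simp add: algebra_simps power2_eq_square)
  finally show ?thesis by linarith
qed

lemma obtain_maximal_clique:
  assumes "finite V" "V \<noteq> {}"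
  obtains K where "K \<subseteq> V" "K \<noteq> {}" "edges_of K \<subseteq> E"
    "\<And>u. u \<in> V - K \<Longrightarrow> \<not> edges_of (insert u K) \<subseteq> E"
proof -
  define is_clique where "is_clique K \<longleftrightarrow> K \<subseteq> V \<and> K \<noteq> {} \<and> edges_of K \<subseteq> E" for K
  obtain v where "v \<in> V" using assms(2) by blast
  then have "is_clique {v}"
    by (auto simp: is_clique_def edges_of_iff)
  moreover have "\<forall>K. is_clique K \<longrightarrow> card K < card V + 1"
    using assms(1) by (auto simp: is_clique_def less_Suc_eq_le intro: card_mono)
  ultimately obtain K where K: "is_clique K" and K_max: "\<And>L. is_clique L \<Longrightarrow> card L \<le> card K"
    using ex_has_greatest_nat[of is_clique "{v}" card] by blast
  have "finite K"
    using K assms(1) finite_subset by (auto simp: is_clique_def)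
  have maximal: "\<not> edges_of (insert u K) \<subseteq> E" if "u \<in> V - K" for u
  proof
    assume "edges_of (insert u K) \<subseteq> E"
    then have "is_clique (insert u K)"
      using that K by (simp add: is_clique_def)
    then show False
      using K_max[of "insert u K"] that \<open>finite K\<close> by simp
  qed
  show thesis
    by (rule that[OF _ _ _ maximal]) (use K in \<open>auto simp: is_clique_def\<close>)
qed

lemma card_clique_le:
  assumes "finite K" "K \<subseteq> V" "edges_of K \<subseteq> E"
    "\<nexists>S. S \<subseteq> V \<and> card S = k + 2 \<and> edges_of S \<subseteq> E"
  shows "card K \<le> k + 1"
proof (rule ccontr)
  assume "\<not> card K \<le> k + 1"
  then obtain S where "S \<subseteq> K" "card S = k + 2"
    using obtain_subset_with_card_n[of "k + 2" K] by auto
  moreover have "S \<subseteq> V" "edges_of S \<subseteq> E"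
    using \<open>S \<subseteq> K\<close> assms(2,3) edges_of_mono[of S K] by auto
  ultimately show False
    using assms(4) by blast
qed

text \<open>Induction on \<open>card V\<close>, removing a maximal clique \<open>K\<close>: it has at most \<open>k + 1\<close> vertices,
  and every other vertex has fewer than \<open>card K\<close> neighbours in it.\<close>
theorem turan_edge_bound:
  assumes "finite V" "E \<subseteq> edges_of V" "\<nexists>S. S \<subseteq> V \<and> card S = k + 2 \<and> edges_of S \<subseteq> E"
  shows "2 * (k + 1) * card E \<le> k * card V ^ 2"
  using assms
proof (induction "card V" arbitrary: V E rule: less_induct)
  case less
  show ?case
  proof (cases "V = {}")
    case True
    with less.prems(2) have "E = {}" by (auto simp: edges_of_def)
    then show ?thesis by simp
  next
    case False
    obtain K where K: "K \<subseteq> V" "K \<noteq> {}" "edges_of K \<subseteq> E"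
      and K_max: "\<And>u. u \<in> V - K \<Longrightarrow> \<not> edges_of (insert u K) \<subseteq> E"
      using obtain_maximal_clique[OF less.prems(1) False] by blast
    have "finite K" using K(1) less.prems(1) finite_subset by blast
    have s_pos: "1 \<le> card K"
      using K(2) \<open>finite K\<close> by (simp add: Suc_leI card_gt_0_iff)
    have s_le: "card K \<le> k + 1"
      using card_clique_le[OF \<open>finite K\<close> K(1,3) less.prems(3)] .
    have neighbours: "card {w\<in>K. {u, w} \<in> E} \<le> card K - 1" if "u \<in> V - K" for u
      using card_neighbours_in_clique_less[OF \<open>finite K\<close> K(3) _ K_max[OF that]] that by force
    have W: "finite (V - K)" "card (V - K) < card V" "card V = card (V - K) + card K"
      using less.prems(1) K(1) s_pos card_mono[OF less.prems(1) K(1)]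
      by (simp_all add: card_Diff_subset[OF \<open>finite K\<close> K(1)])
    have IH: "2 * (k + 1) * card (E \<inter> edges_of (V - K)) \<le> k * card (V - K) ^ 2"
      by (rule less.hyps[OF W(2) W(1)]) (use less.prems(3) in blast)+
    have "card E \<le> (card K choose 2) + card (V - K) * (card K - 1) + card (E \<inter> edges_of (V - K))"
    proof -
      have "(\<Sum>u\<in>V - K. card {w\<in>K. {u, w} \<in> E}) \<le> card (V - K) * (card K - 1)"
        using sum_mono[of "V - K", OF neighbours] by simp
      then show ?thesis
        using card_edges_le_split[OF less.prems(1) K(1) less.prems(2)]
          card_edges_of[OF \<open>finite K\<close>] by linarith
    qed
    then have "2 * (k + 1) * card E
        \<le> 2 * (k + 1) * ((card K choose 2) + card (V - K) * (card K - 1) + card (E \<inter> edges_of (V - K)))"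
      by (rule mult_le_mono2)
    also have "\<dots> \<le> k * card V ^ 2"
      using turan_step_arith[OF s_pos s_le IH] W(3) by simp
    finally show ?thesis .
  qed
qed

lemma clique_free_of_avoided_colour:
  assumes "edge_colouring r n c" "i < r"
    "\<nexists>S. S \<subseteq> {..<n} \<and> card S = s \<and> card (c ` edges_of S) \<le> r - 1"
  shows "\<nexists>S. S \<subseteq> {..<n} \<and> card S = s \<and> edges_of S \<subseteq> {e \<in> edges_of {..<n}. c e \<noteq> i}"
proof
  assume "\<exists>S. S \<subseteq> {..<n} \<and> card S = s \<and> edges_of S \<subseteq> {e \<in> edges_of {..<n}. c e \<noteq> i}"
  then obtain S where S: "S \<subseteq> {..<n}" "card S = s" "edges_of S \<subseteq> {e \<in> edges_of {..<n}. c e \<noteq> i}"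
    by blast
  have "c ` edges_of S \<subseteq> {..<r} - {i}"
    using S(3) assms(1) unfolding edge_colouring_def by auto
  then have "card (c ` edges_of S) \<le> card ({..<r} - {i})"
    by (rule card_mono[rotated]) simp
  also have "\<dots> = r - 1"
    using assms(2) by simp
  finally have "card (c ` edges_of S) \<le> r - 1" .
  with S(1,2) assms(3) show False by blast
qed

lemma sum_card_other_colours:
  assumes "finite A" "\<forall>e\<in>A. c e < r"
  shows "(\<Sum>i<r. card {e\<in>A. c e \<noteq> i}) = (r - 1) * card A"
proof -
  have "(\<Sum>i<r. card {e\<in>A. c e \<noteq> i}) = (\<Sum>i<r. \<Sum>e\<in>A. if c e \<noteq> i then 1 else 0)"
    using assms(1) by (simp add: sum.inter_filter[symmetric])
  also have "\<dots> = (\<Sum>e\<in>A. \<Sum>i<r. if c e \<noteq> i then 1 else 0)"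
    by (rule sum.swap)
  also have "\<dots> = (\<Sum>e\<in>A. card {i\<in>{..<r}. c e \<noteq> i})"
    by (simp add: sum.inter_filter[symmetric])
  also have "\<dots> = (\<Sum>e\<in>A. r - 1)"
  proof (rule sum.cong[OF refl])
    fix e assume "e \<in> A"
    have "{i\<in>{..<r}. c e \<noteq> i} = {..<r} - {c e}" by blast
    then show "card {i\<in>{..<r}. c e \<noteq> i} = r - 1"
      using assms(2) \<open>e \<in> A\<close> by simp
  qed
  finally show ?thesis by simp
qed

lemma GR_prop_by_turan:
  assumes "r * (s - 2) * n\<^sup>2 < 2 * (s - 1) * (r - 1) * (n choose 2)"
  shows "GR_prop r s (r - 1) n"
  unfolding GR_prop_def
proof (intro allI impI, rule ccontr)
  fix c assume c: "edge_colouring r n c"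
    and no: "\<not> (\<exists>S. S \<subseteq> {..<n} \<and> card S = s \<and> card (c ` edges_of S) \<le> r - 1)"
  have "2 \<le> s"
  proof (rule ccontr)
    assume "\<not> 2 \<le> s"
    then have "s - 1 = 0" by simp
    with assms show False by simp
  qed
  then obtain k where s: "s = k + 2"
    by (metis le_add_diff_inverse2)
  then have k: "s - 2 = k" "s - 1 = k + 1"
    by simp_all
  define A where "A = edges_of {..<n}"
  have "2 * (k + 1) * card {e\<in>A. c e \<noteq> i} \<le> k * card {..<n} ^ 2" if "i < r" for i
    using clique_free_of_avoided_colour[OF c that no] unfolding A_def s
    by (intro turan_edge_bound) auto
  then have "(\<Sum>i<r. 2 * (k + 1) * card {e\<in>A. c e \<noteq> i}) \<le> (\<Sum>i<r. k * n\<^sup>2)"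
    by (intro sum_mono) simp
  also have "\<dots> = r * (k * n\<^sup>2)" by simp
  finally have "(\<Sum>i<r. 2 * (k + 1) * card {e\<in>A. c e \<noteq> i}) \<le> r * (k * n\<^sup>2)" .
  moreover have "(\<Sum>i<r. 2 * (k + 1) * card {e\<in>A. c e \<noteq> i}) = 2 * (k + 1) * ((r - 1) * (n choose 2))"
    unfolding sum_distrib_left[symmetric] using sum_card_other_colours[of A c r] c
    by (simp add: A_def finite_edges_of card_edges_of edge_colouring_def)
  moreover have "r * (k * n\<^sup>2) < 2 * (k + 1) * ((r - 1) * (n choose 2))"
    using assms unfolding k by (simp only: mult.assoc)
  ultimately show False by linarith
qed

text \<open>The point \<open>x < 9\<close> has coordinates \<open>(x div 3, x mod 3)\<close>; \<open>affine_line i x\<close> names the line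
  through it in parallel class \<open>i\<close> (vertical for \<open>i = 0\<close>, slope \<open>i - 1\<close> otherwise).\<close>
definition affine_line :: "nat \<Rightarrow> nat \<Rightarrow> nat" where
  "affine_line i x = (if i = 0 then x div 3 else (x mod 3 + (i - 1) * (x div 3)) mod 3)"

lemma affine_line_less: "x < 9 \<Longrightarrow> affine_line i x < 3"
  unfolding affine_line_def by auto

lemma affine_lines_meet_once:
  assumes "x < 9" "y < 9" "x \<noteq> y" "i < 4" "j < 4"
    "affine_line i x = affine_line i y" "affine_line j x = affine_line j y"
  shows "i = j"
proof -
  have "x \<in> {0, 1, 2, 3, 4, 5, 6, 7, 8}" "y \<in> {0, 1, 2, 3, 4, 5, 6, 7, 8}"
       "i \<in> {0, 1, 2, 3}" "j \<in> {0, 1, 2, 3}"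
    using assms(1,2,4,5) by auto
  then show ?thesis
    using assms(3,6,7) unfolding affine_line_def by (elim insertE emptyE) simp_all
qed

text \<open>The disjunct \<open>i = 3\<close> only bounds the colour.\<close>
definition affine_colouring :: "nat set \<Rightarrow> nat" where
  "affine_colouring e = (LEAST i. i = 3 \<or> (\<forall>x\<in>e. \<forall>y\<in>e. affine_line i x = affine_line i y))"

lemma affine_colouring_less: "affine_colouring e < 4"
proof -
  have "affine_colouring e \<le> 3"
    unfolding affine_colouring_def by (rule Least_le) simp
  then show ?thesis by simp
qed

lemma affine_colouring_doubleton:
  assumes "x < 9" "y < 9" "x \<noteq> y" "i < 4" "affine_line i x = affine_line i y"
  shows "affine_colouring {x, y} = i"
  unfolding affine_colouring_def
proof (rule Least_equality)
  fix j assume j: "j = 3 \<or> (\<forall>u\<in>{x, y}. \<forall>v\<in>{x, y}. affine_line j u = affine_line j v)"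
  show "i \<le> j"
  proof (cases "j < 3")
    case True
    then have "j \<noteq> 3" by simp
    with j have "affine_line j x = affine_line j y" by blast
    moreover have "j < 4" using True by simp
    ultimately have "i = j"
      using affine_lines_meet_once[OF assms(1-4) _ assms(5)] by blast
    then show ?thesis by simp
  next
    case False
    with assms(4) show ?thesis by simp
  qed
qed (use assms(5) in auto)

lemma affine_colouring_surjective_on_quadruples:
  assumes "S \<subseteq> {..<9}" "card S = 4"
  shows "affine_colouring ` edges_of S = {..<4}"
proof
  show "affine_colouring ` edges_of S \<subseteq> {..<4}"
    using affine_colouring_less by auto
next
  show "{..<4} \<subseteq> affine_colouring ` edges_of S"
  proof
    fix i :: nat assume "i \<in> {..<4}"
    have "card (affine_line i ` S) \<le> card {..<3::nat}"
      using assms(1) affine_line_less by (intro card_mono) auto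
    then have "\<not> inj_on (affine_line i) S"
      using assms(2) card_image[of "affine_line i" S] by auto
    then obtain x y where "x \<in> S" "y \<in> S" "x \<noteq> y" "affine_line i x = affine_line i y"
      unfolding inj_on_def by blast
    moreover have "affine_colouring {x, y} = i"
      using calculation \<open>i \<in> {..<4}\<close> assms(1) by (intro affine_colouring_doubleton) auto
    ultimately show "i \<in> affine_colouring ` edges_of S"
      by (metis doubleton_in_edges_of image_eqI)
  qed
qed

lemma not_GR_prop_4_4_3_le_9: "n \<le> 9 \<Longrightarrow> \<not> GR_prop 4 4 3 n"
proof
  assume "n \<le> 9" "GR_prop 4 4 3 n"
  moreover have "edge_colouring 4 n affine_colouring"
    unfolding edge_colouring_def using affine_colouring_less by simp
  ultimately obtain S where "S \<subseteq> {..<n}" "card S = 4" "card (affine_colouring ` edges_of S) \<le> 3"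
    unfolding GR_prop_def by blast
  moreover have "S \<subseteq> {..<9}"
    using \<open>S \<subseteq> {..<n}\<close> \<open>n \<le> 9\<close> by auto
  ultimately show False
    using affine_colouring_surjective_on_quadruples by simp
qed

theorem mainTheorem10:
  shows "GR 4 4 3 = 10"
  unfolding GR_def
proof (rule Least_equality)
  show "GR_prop 4 4 3 10"
    using GR_prop_by_turan[of 4 4 10] by (simp add: choose_two)
next
  show "10 \<le> n" if "GR_prop 4 4 3 n" for n
    using not_GR_prop_4_4_3_le_9[of n] that by linarith
qed

end
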